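(* Let $m \equiv 1 \pmod 4$ with $m > 1$, $n = 3^m - 1$, $v = (3^{(m-1)/2}+1)/2$ and $\delta = (3^{(m-1)/2}+13)/2$. Then $\gcd(v,n) = 1$, and, setting $T_{(1,2,m)}(v) = \{ vi \bmod n : i \in T_{(1,2,m)}\}$, we have $\{1, 2, \ldots, \delta-1\} \subseteq T_{(1,2,m)}(v)$.
   Context: For an integer $0 \le j \le n-1$ with $3$-adic expansion $j = \sum_{t=0}^{m-1} j_t 3^t$, $j_t \in \{0,1,2\}$, let $w_3(j) = \sum_{t=0}^{m-1} j_t$. For distinct $i_1,i_2 \in \{0,1,2,3\}$, $T_{(i_1,i_2,m)} = \{1 \le j \le n-1 : w_3(j) \equiv i_1 \text{ or } i_2 \pmod 4\}$. For an integer $b$, $b \bmod n$ is the unique $b_0 \in \{0,\ldots,n-1\}$ with $b \equiv b_0 \pmod n$. *)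

theory Defs
  imports Main
begin

fun w3 :: "nat \<Rightarrow> nat" where
  "w3 j = (if j = 0 then 0 else j mod 3 + w3 (j div 3))"

definition T_set :: "nat \<Rightarrow> nat \<Rightarrow> nat \<Rightarrow> nat set" where
  "T_set i1 i2 m = {j. 1 \<le> j \<and> j \<le> 3 ^ m - 2 \<and>
      (w3 j mod 4 = i1 \<or> w3 j mod 4 = i2)}"

end

theory Submission
  imports Defs
begin

(* Write q = 3^h with h = (m - 1)/2, which is even; then n = 3 q^2 - 1 and 2 v = q + 1.
   Every target a < v + 6 has an explicit preimage i under multiplication by v mod n,
   mostly of the form i = 3 q x + y with y < 3 q, so that the ternary digits of i are those
   of x followed by those of y:
     even a < q:   i = 3 q (q - a) + 3 (a - 1) + 2,
     odd a < v:    i = 3 q (r - a) + 3 (r + a) + 1,  where r = (q - 1)/2,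
     a = v + 2 t:  i = 3 q (q - 2 t) + 3 (2 t),  for t = 1, 2,
     a = v, 2 v:   i = 1, 2.
   In the first three cases the two blocks are complementary digit strings below
   q - 1 = (22...2)_3, whose digit sum is 2 h (for the third, w3 (2 t) = w3 (2 t - 1) + 1
   as 3 does not divide t), so w3 i is 2 h + 1 or 2 h + 2, i.e. 1 or 2 mod 4.
   Since 1 is attained, v is invertible mod n. *)

lemma w3_0 [simp]: "w3 0 = 0"
  by (subst w3.simps) simp

lemma w3_mod_div: "w3 j = j mod 3 + w3 (j div 3)"
  by (subst w3.simps) auto

declare w3.simps [simp del]

lemma w3_mult3_add: "d < 3 \<Longrightarrow> w3 (3 * x + d) = d + w3 x"
  by (subst w3_mod_div) simp

lemma w3_mult3: "w3 (3 * x) = w3 x"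
  using w3_mult3_add[of 0 x] by simp

lemma w3_Suc: "Suc j mod 3 \<noteq> 0 \<Longrightarrow> w3 (Suc j) = Suc (w3 j)"
  using w3_mod_div[of "Suc j"] w3_mod_div[of j] by (simp add: mod_Suc div_Suc split: if_splits)

lemma w3_pow3_mult_add: "y < 3 ^ j \<Longrightarrow> w3 (3 ^ j * x + y) = w3 x + w3 y"
proof (induction j arbitrary: y)
  case (Suc j)
  have "y div 3 < 3 ^ j"
    using Suc.prems by (simp add: less_mult_imp_div_less mult.commute)
  have digits: "3 ^ Suc j * x + y = 3 * (3 ^ j * x + y div 3) + y mod 3"
    by simp
  have "w3 (3 ^ Suc j * x + y) = y mod 3 + w3 (3 ^ j * x + y div 3)"
    unfolding digits by (rule w3_mult3_add) simp
  also have "\<dots> = w3 x + (y mod 3 + w3 (y div 3))"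
    using Suc.IH[OF \<open>y div 3 < 3 ^ j\<close>] by simp
  also have "y mod 3 + w3 (y div 3) = w3 y"
    by (rule w3_mod_div[symmetric])
  finally show ?case .
qed simp

lemma w3_complement: "c < 3 ^ h \<Longrightarrow> w3 (3 ^ h - 1 - c) + w3 c = 2 * h"
proof (induction h arbitrary: c)
  case (Suc h)
  have c': "c div 3 < 3 ^ h"
    using Suc.prems by (simp add: less_mult_imp_div_less mult.commute)
  have digits: "3 ^ Suc h - 1 - c = 3 * (3 ^ h - 1 - c div 3) + (2 - c mod 3)"
    unfolding power_Suc using c' div_mult_mod_eq[of c 3] mod_less_divisor[of 3 c] by linarith
  have "w3 (3 ^ Suc h - 1 - c) = (2 - c mod 3) + w3 (3 ^ h - 1 - c div 3)"
    unfolding digits by (rule w3_mult3_add) simp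
  moreover have "2 - c mod 3 + c mod 3 = 2"
    by simp
  ultimately show ?case
    using Suc.IH[OF c'] w3_mod_div[of c] by simp
qed simp

lemma mod_eq_if_add_eq:
  fixes x a c n :: nat
  assumes "x + c = a + c * (n + 1)" and "a < n"
  shows "x mod n = a"
proof -
  have "x = a + c * n"
    using assms(1) by (simp add: algebra_simps)
  with assms(2) show ?thesis
    by simp
qed

lemma coprime_if_mult_mod_eq_1:
  fixes a b c :: nat
  assumes "(a * b) mod c = 1"
  shows "coprime a c"
proof (rule coprimeI)
  fix d
  assume "d dvd a" "d dvd c"
  then have "d dvd (a * b) mod c"
    by (simp add: dvd_mod_iff)
  with assms show "is_unit d"
    by simp
qed

locale ternary_multiplier =
  fixes h q v n :: nat
  assumes even_h: "even h" and pos_h: "0 < h"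
    and q_eq: "q = 3 ^ h"
    and v_eq: "2 * v = q + 1"
    and n_eq: "n + 1 = 3 * q\<^sup>2"
begin

abbreviation T_scaled :: "nat set"
  where "T_scaled \<equiv> (\<lambda>i. (v * i) mod n) ` T_set 1 2 (2 * h + 1)"

lemma odd_q: "odd q"
  by (simp add: q_eq)

lemma q_mod_4: "q mod 4 = 1"
proof -
  obtain k where "h = 2 * k"
    using even_h by blast
  then have "q = 9 ^ k"
    by (simp add: q_eq power_mult)
  then show ?thesis
    using power_mod[of "9::nat" 4 k] by simp
qed

lemma q_ge_9: "9 \<le> q"
proof -
  have "2 \<le> h"
    using even_h pos_h by presburger
  then have "3 ^ 2 \<le> q"
    unfolding q_eq by (rule power_increasing) simp
  then show ?thesis
    by simp
qed

lemma double_q_less_n: "2 * q < n"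
proof -
  have "9 * q \<le> q * q"
    using q_ge_9 by simp
  then show ?thesis
    using n_eq q_ge_9 unfolding power2_eq_square by linarith
qed

lemma T_scaled_memI:
  assumes "0 < i" "i < n" "w3 i mod 4 = 1 \<or> w3 i mod 4 = 2"
    and "v * i + c = a + c * (n + 1)" "a < n"
  shows "a \<in> T_scaled"
proof
  have "3 ^ (2 * h + 1) = n + 1"
    unfolding n_eq q_eq by (simp add: power_mult[symmetric] mult.commute)
  then show "i \<in> T_set 1 2 (2 * h + 1)"
    using assms(1-3) by (simp add: T_set_def)
  show "a = (v * i) mod n"
    using mod_eq_if_add_eq[OF assms(4,5)] by simp
qed

lemma pow3_Suc_mult_add_less_n:
  assumes "x + z = q" "0 < z" "y \<le> 3 * z"
  shows "3 ^ Suc h * x + y < n"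
proof -
  have "9 * z \<le> q * z"
    using q_ge_9 by simp
  then have "3 * z + 1 < 3 * q * z"
    using \<open>0 < z\<close> by linarith
  moreover have "n + 1 = 3 * q * x + 3 * q * z"
    unfolding n_eq power2_eq_square assms(1)[symmetric] by (simp add: algebra_simps)
  ultimately show ?thesis
    using assms(3) q_eq by simp
qed

lemma even_mem_T_scaled:
  assumes "even a" "0 < a" "a < q"
  shows "a \<in> T_scaled"
proof -
  obtain s d where a: "a = 2 * s + 2" and q: "q = 2 * s + 2 * d + 3"
    using assms odd_q by (intro that[of "a div 2 - 1" "(q - a - 1) div 2"]) presburger+
  define i where "i = 3 ^ Suc h * (q - a) + (3 * (a - 1) + 2)"
  have "w3 i = w3 (q - a) + w3 (3 * (a - 1) + 2)"
    unfolding i_def by (rule w3_pow3_mult_add) (use assms q_eq in simp)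
  also have "w3 (3 * (a - 1) + 2) = 2 + w3 (a - 1)"
    by (rule w3_mult3_add) simp
  also have "q - a = 3 ^ h - 1 - (a - 1)"
    using assms q_eq by simp
  also have "w3 (3 ^ h - 1 - (a - 1)) + (2 + w3 (a - 1)) = 2 * h + 2"
    using w3_complement[of "a - 1" h] assms q_eq by simp
  finally have "w3 i mod 4 = 2"
    using even_h by presburger
  have i: "i = 3 * q * (2 * d + 1) + (6 * s + 5)"
    unfolding i_def using a q q_eq by simp
  have v: "v = s + d + 2"
    using v_eq q by simp
  have identity: "v * i + (d + 1) = a + (d + 1) * (n + 1)"
    unfolding i v n_eq a q by (simp add: algebra_simps power2_eq_square)
  have "i < n"
    unfolding i_def by (rule pow3_Suc_mult_add_less_n[where z = a]) (use assms in linarith)+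
  show ?thesis
    by (rule T_scaled_memI[OF _ \<open>i < n\<close> _ identity])
      (use \<open>w3 i mod 4 = 2\<close> assms(3) double_q_less_n i in simp_all)
qed

lemma odd_mem_T_scaled:
  assumes "odd a" "a < v"
  shows "a \<in> T_scaled"
proof -
  define r where "r = v - 1"
  have q_r: "q = 2 * r + 1"
    using v_eq odd_q unfolding r_def by simp
  have "even r"
    using q_mod_4 q_r by presburger
  with assms have "a < r"
    unfolding r_def by presburger
  obtain s where a: "a = 2 * s + 1"
    using \<open>odd a\<close> oddE by blast
  obtain w where diff: "r - a = 2 * w + 1"
    using \<open>even r\<close> \<open>odd a\<close> \<open>a < r\<close> by (intro that[of "(r - a) div 2"]) presburger
  then have q: "q = 4 * s + 4 * w + 5"
    using q_r a \<open>a < r\<close> by simp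
  have sum: "r + a = 4 * s + 2 * w + 3"
    using diff a \<open>a < r\<close> by simp
  define i where "i = 3 ^ Suc h * (r - a) + (3 * (r + a) + 1)"
  have "w3 i = w3 (r - a) + w3 (3 * (r + a) + 1)"
    unfolding i_def by (rule w3_pow3_mult_add) (use assms q_r q_eq r_def in simp)
  also have "w3 (3 * (r + a) + 1) = 1 + w3 (r + a)"
    by (rule w3_mult3_add) simp
  also have "r + a = 3 ^ h - 1 - (r - a)"
    using assms q_r q_eq r_def by simp
  also have "w3 (r - a) + (1 + w3 (3 ^ h - 1 - (r - a))) = 2 * h + 1"
  proof -
    have "r - a < 3 ^ h"
      using q_r q_eq by simp
    from w3_complement[OF this] show ?thesis
      by simp
  qed
  finally have "w3 i mod 4 = 1"
    using even_h by presburger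
  have i: "i = 3 * q * (2 * w + 1) + (12 * s + 6 * w + 10)"
    unfolding i_def diff sum using q q_eq by simp
  have v: "v = 2 * s + 2 * w + 3"
    using v_eq q by simp
  have identity: "v * i + (w + 1) = a + (w + 1) * (n + 1)"
    unfolding i v n_eq a q by (simp add: algebra_simps power2_eq_square)
  have "i < n"
    unfolding i_def by (rule pow3_Suc_mult_add_less_n[where z = "r + a + 1"])
      (use q_r \<open>a < r\<close> in simp_all)
  show ?thesis
    by (rule T_scaled_memI[OF _ \<open>i < n\<close> _ identity])
      (use \<open>w3 i mod 4 = 1\<close> assms v_eq double_q_less_n i in simp_all)
qed

lemma v_add_even_mem_T_scaled:
  assumes "0 < t" "\<not> 3 dvd t" "2 * t < q"
  shows "v + 2 * t \<in> T_scaled"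
proof -
  obtain e where q: "q = 2 * t + 2 * e + 1"
    using assms(3) odd_q by (intro that[of "(q - 2 * t - 1) div 2"]) presburger
  define i where "i = 3 ^ Suc h * (q - 2 * t) + 3 * (2 * t)"
  have "w3 i = w3 (q - 2 * t) + w3 (3 * (2 * t))"
    unfolding i_def by (rule w3_pow3_mult_add) (use assms q_eq in simp)
  also have "w3 (3 * (2 * t)) = w3 (Suc (2 * t - 1))"
    unfolding w3_mult3 using assms(1) by simp
  also have "w3 (Suc (2 * t - 1)) = Suc (w3 (2 * t - 1))"
    using assms(1,2) by (intro w3_Suc) presburger
  also have "q - 2 * t = 3 ^ h - 1 - (2 * t - 1)"
    using assms q_eq by simp
  also have "w3 (3 ^ h - 1 - (2 * t - 1)) + Suc (w3 (2 * t - 1)) = 2 * h + 1"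
    using w3_complement[of "2 * t - 1" h] assms q_eq by simp
  finally have "w3 i mod 4 = 1"
    using even_h by presburger
  have i: "i = 3 * q * (2 * e + 1) + 6 * t"
    unfolding i_def using q q_eq by simp
  have v: "v = t + e + 1"
    using v_eq q by simp
  have identity: "v * i + (e + 1) = (v + 2 * t) + (e + 1) * (n + 1)"
    unfolding i v n_eq q by (simp add: algebra_simps power2_eq_square)
  have "i < n"
    unfolding i_def by (rule pow3_Suc_mult_add_less_n[where z = "2 * t"]) (use assms in linarith)+
  show ?thesis
    by (rule T_scaled_memI[OF _ \<open>i < n\<close> _ identity])
      (use \<open>w3 i mod 4 = 1\<close> assms v_eq double_q_less_n i in simp_all)
qed

lemma mult_v_mem_T_scaled:
  assumes "0 < j" "j < 3"
  shows "j * v \<in> T_scaled"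
proof (rule T_scaled_memI[of j])
  show "j < n"
    using assms double_q_less_n q_ge_9 by simp
  have "w3 j = j"
    using w3_mult3_add[of j 0] assms(2) by simp
  then show "w3 j mod 4 = 1 \<or> w3 j mod 4 = 2"
    using assms by auto
  show "v * j + 0 = j * v + 0 * (n + 1)"
    by simp
  have "j * v \<le> 2 * v"
    using assms by simp
  then show "j * v < n"
    using v_eq double_q_less_n q_ge_9 by linarith
qed (use assms in simp)

lemma interval_subset_T_scaled: "{1..<v + 6} \<subseteq> T_scaled"
proof
  fix a
  assume "a \<in> {1..<v + 6}"
  then have a: "0 < a" "a < v + 6"
    by auto
  show "a \<in> T_scaled"
  proof (cases "even a")
    case True
    then have "a < q \<or> a = 2 * v"
      using a v_eq q_ge_9 by presburger
    with True a show ?thesis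
      using even_mem_T_scaled mult_v_mem_T_scaled[of 2] by auto
  next
    case False
    moreover have "odd v"
      using v_eq q_mod_4 by presburger
    ultimately have "a < v \<or> a = 1 * v \<or> a = v + 2 * 1 \<or> a = v + 2 * 2"
      using a by presburger
    with False show ?thesis
      using odd_mem_T_scaled mult_v_mem_T_scaled[of 1] v_add_even_mem_T_scaled[of 1]
        v_add_even_mem_T_scaled[of 2] q_ge_9
      by auto
  qed
qed

end

theorem lemma3:
  fixes m n v \<delta> :: nat
  assumes "m mod 4 = 1" and "m > 1"
    and "n = 3 ^ m - 1"
    and "v = (3 ^ ((m - 1) div 2) + 1) div 2"
    and "\<delta> = (3 ^ ((m - 1) div 2) + 13) div 2"
  shows "gcd v n = 1 \<and> {1..<\<delta>} \<subseteq> (\<lambda>i. (v * i) mod n) ` T_set 1 2 m"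
proof -
  define h where "h = (m - 1) div 2"
  define q :: nat where "q = 3 ^ h"
  have m: "m = 2 * h + 1" and h: "even h" "0 < h"
    using assms(1,2) unfolding h_def by presburger+
  have "odd q"
    unfolding q_def by simp
  then have v: "2 * v = q + 1" and \<delta>: "\<delta> = v + 6"
    using assms(4,5) unfolding q_def h_def by presburger+
  have "n + 1 = 3 * q\<^sup>2"
    using assms(3) unfolding m q_def by (simp add: power_mult[symmetric] mult.commute)
  then interpret ternary_multiplier h q v n
    using h v q_def by unfold_locales
  have "1 \<in> T_scaled"
    by (rule odd_mem_T_scaled) (use v q_ge_9 in simp_all)
  then have "coprime v n"
    using coprime_if_mult_mod_eq_1 by auto
  then show ?thesis
    using interval_subset_T_scaled unfolding \<delta> m by simp
qed

end
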